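(* Let $D$ be a tournament missing disjoint paths of length 2, and let $C=a_1b_1c_1,\dots,a_kb_kc_k$ be a double cycle in $\Delta(D)$. Then there exists $t\in\{1,\dots,k\}$ such that $|N^+_{D[K(C)]}(b_t)|\le|N^{++}_{D[K(C)]}(b_t)|$.
   Context: All digraphs are finite oriented graphs; $D[X]$ is the subdigraph induced by $X$. $N^+_H(v)$ is the out-neighborhood in $H$; $N^{++}_H(v)$ is the set of vertices $w\notin N_H^+(v)\cup\{v\}$ with $u\to w$ in $H$ for some $u\in N_H^+(v)$. A missing edge is a pair of distinct non-adjacent vertices; the missing graph is formed by the missing edges. $D$ is a tournament missing disjoint paths of length 2 if its missing graph is a vertex-disjoint union of paths each with exactly two edges. For missing edges $\{x,y\},\{a,b\}$, $\{x,y\}$ loses to $\{a,b\}$ (written $xy\to ab$) if the endpoints can be labelled so that $x\to a$, $b\notin N^+(x)\cup N^{++}(x)$, $y\to b$, $a\notin N^+(y)\cup N^{++}(y)$ (neighborhoods in $D$). $\Delta(D)$ has the missing edges as vertices and arcs $(e,e')$ whenever $e$ loses to $e'$. For missing paths $abc$, $xyz$ (edges $ab,bc$ and $xy,yz$), $abc\to xyz$ means each of $ab,bc$ loses to each of $xy,yz$. A double cycle is a sequence $C=a_1b_1c_1,\dots,a_kb_kc_k$ ($k\ge2$) of distinct missing paths of length 2 (components of the missing graph) with $a_ib_ic_i\to a_{i+1}b_{i+1}c_{i+1}$ for all $i$, indices modulo $k$. $K(C)=\{a_i,b_i,c_i: 1\le i\le k\}$. *)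

theory Defs
  imports Main
begin

definition oriented_graph :: "'a set \<Rightarrow> ('a \<Rightarrow> 'a \<Rightarrow> bool) \<Rightarrow> bool" where
  "oriented_graph V arc \<longleftrightarrow> finite V
     \<and> (\<forall>u v. arc u v \<longrightarrow> u \<in> V \<and> v \<in> V)
     \<and> (\<forall>u. \<not> arc u u)
     \<and> (\<forall>u v. arc u v \<longrightarrow> \<not> arc v u)"

definition outN :: "('a \<Rightarrow> 'a \<Rightarrow> bool) \<Rightarrow> 'a set \<Rightarrow> 'a \<Rightarrow> 'a set" where
  "outN arc X v = {w \<in> X. arc v w}"

definition outN2 :: "('a \<Rightarrow> 'a \<Rightarrow> bool) \<Rightarrow> 'a set \<Rightarrow> 'a \<Rightarrow> 'a set" where
  "outN2 arc X v = {w \<in> X. w \<notin> outN arc X v \<and> w \<noteq> v \<and> (\<exists>u \<in> outN arc X v. arc u w)}"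

definition missing :: "'a set \<Rightarrow> ('a \<Rightarrow> 'a \<Rightarrow> bool) \<Rightarrow> 'a \<Rightarrow> 'a \<Rightarrow> bool" where
  "missing V arc x y \<longleftrightarrow> x \<in> V \<and> y \<in> V \<and> x \<noteq> y \<and> \<not> arc x y \<and> \<not> arc y x"

definition missN :: "'a set \<Rightarrow> ('a \<Rightarrow> 'a \<Rightarrow> bool) \<Rightarrow> 'a \<Rightarrow> 'a set" where
  "missN V arc v = {w. missing V arc v w}"

text \<open>a b c is a component of the missing graph which is a path with edges ab, bc.\<close>
definition missing_path :: "'a set \<Rightarrow> ('a \<Rightarrow> 'a \<Rightarrow> bool) \<Rightarrow> 'a \<Rightarrow> 'a \<Rightarrow> 'a \<Rightarrow> bool" where
  "missing_path V arc a b c \<longleftrightarrow> a \<noteq> b \<and> b \<noteq> c \<and> a \<noteq> c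
     \<and> missN V arc a = {b} \<and> missN V arc b = {a, c} \<and> missN V arc c = {b}"

text \<open>D is a tournament missing disjoint paths of length 2: the missing graph is a
  vertex-disjoint union of paths with exactly two edges, i.e. every vertex incident to a
  missing edge lies on such a component.\<close>
definition tournament_missing_P2 :: "'a set \<Rightarrow> ('a \<Rightarrow> 'a \<Rightarrow> bool) \<Rightarrow> bool" where
  "tournament_missing_P2 V arc \<longleftrightarrow> oriented_graph V arc
     \<and> (\<forall>v. missN V arc v \<noteq> {} \<longrightarrow>
           (\<exists>a b c. missing_path V arc a b c \<and> v \<in> {a, b, c}))"

text \<open>Labelled losing condition (neighbourhoods taken in D itself).\<close>
definition loses_lab :: "'a set \<Rightarrow> ('a \<Rightarrow> 'a \<Rightarrow> bool) \<Rightarrow> 'a \<Rightarrow> 'a \<Rightarrow> 'a \<Rightarrow> 'a \<Rightarrow> bool" where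
  "loses_lab V arc x y a b \<longleftrightarrow>
     arc x a \<and> b \<notin> outN arc V x \<union> outN2 arc V x
     \<and> arc y b \<and> a \<notin> outN arc V y \<union> outN2 arc V y"

definition loses :: "'a set \<Rightarrow> ('a \<Rightarrow> 'a \<Rightarrow> bool) \<Rightarrow> 'a set \<Rightarrow> 'a set \<Rightarrow> bool" where
  "loses V arc e e' \<longleftrightarrow> (\<exists>x y a b. e = {x, y} \<and> e' = {a, b}
       \<and> missing V arc x y \<and> missing V arc a b \<and> loses_lab V arc x y a b)"

definition path_loses :: "'a set \<Rightarrow> ('a \<Rightarrow> 'a \<Rightarrow> bool) \<Rightarrow> 'a \<Rightarrow> 'a \<Rightarrow> 'a \<Rightarrow> 'a \<Rightarrow> 'a \<Rightarrow> 'a \<Rightarrow> bool" where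
  "path_loses V arc a b c x y z \<longleftrightarrow>
     (\<forall>e \<in> {{a, b}, {b, c}}. \<forall>e' \<in> {{x, y}, {y, z}}. loses V arc e e')"

text \<open>Double cycle a_i b_i c_i, indices i < k (0-based), successor (i+1) mod k.\<close>
definition double_cycle :: "'a set \<Rightarrow> ('a \<Rightarrow> 'a \<Rightarrow> bool) \<Rightarrow> nat \<Rightarrow>
     (nat \<Rightarrow> 'a) \<Rightarrow> (nat \<Rightarrow> 'a) \<Rightarrow> (nat \<Rightarrow> 'a) \<Rightarrow> bool" where
  "double_cycle V arc k a b c \<longleftrightarrow> k \<ge> 2
     \<and> (\<forall>i < k. missing_path V arc (a i) (b i) (c i))
     \<and> (\<forall>i < k. \<forall>j < k. i \<noteq> j \<longrightarrow> {a i, b i, c i} \<noteq> {a j, b j, c j})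
     \<and> (\<forall>i < k. path_loses V arc (a i) (b i) (c i)
                  (a ((i + 1) mod k)) (b ((i + 1) mod k)) (c ((i + 1) mod k)))"

definition KC :: "nat \<Rightarrow> (nat \<Rightarrow> 'a) \<Rightarrow> (nat \<Rightarrow> 'a) \<Rightarrow> (nat \<Rightarrow> 'a) \<Rightarrow> 'a set" where
  "KC k a b c = (\<Union>i < k. {a i, b i, c i})"

end

theory Submission
  imports Defs
begin

text \<open>Between two consecutive paths a_i b_i c_i and a_i+1 b_i+1 c_i+1 of a double cycle the arcs
  are rigid: an arc joining two middle vertices or two end vertices points like b_i b_i+1, one
  joining a middle and an end points the other way, and a backward arc v \<rightarrow> u closes no
  directed path u \<rightarrow> w \<rightarrow> v. The last property lets the pattern propagate around the cycle, so
  it holds between any two paths of C. Choose t such that at most as many middles b_j beat b_t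
  (the set I) as are beaten by it (the set O). In D[K(C)] the out-neighbourhood of b_t consists
  of the b_j with j in O and the a_j, c_j with j in I, so it has |O| + 2|I| elements; and a_t, c_t,
  the ends of the paths in O and the middles of the paths in I are second out-neighbours,
  except those on a single path (the source of an auxiliary tournament on the paths). Hence the
  second out-neighbourhood has at least 2|O| + |I| \<ge> |O| + 2|I| elements.\<close>

section \<open>Losing pairs of missing edges\<close>

lemma loses_lab_arcs:
  assumes og: "oriented_graph V arc" and lab: "loses_lab V arc x y p q"
    and "arc q x \<or> arc x q" "arc p y \<or> arc y p" "q \<noteq> x" "p \<noteq> y"
  shows "arc x p \<and> arc p y \<and> arc y q \<and> arc q x
     \<and> (\<forall>z. arc x z \<longrightarrow> \<not> arc z q) \<and> (\<forall>z. arc y z \<longrightarrow> \<not> arc z p)"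
proof -
  have inV: "u \<in> V" "v \<in> V" if "arc u v" for u v
    using og that unfolding oriented_graph_def by blast+
  have pq: "q \<in> V" "p \<in> V" using assms(3,4) inV by blast+
  then have "arc x p" "arc y q" "\<not> arc x q" "\<not> arc y p"
    using lab unfolding loses_lab_def outN_def by auto
  then show ?thesis
    using lab pq assms(3-6) inV unfolding loses_lab_def outN2_def outN_def by blast
qed

lemma loses_arcs:
  assumes og: "oriented_graph V arc" and lose: "loses V arc {x, y} {p, q}"
    and dist: "distinct [x, y, p, q]"
    and adj: "\<forall>u\<in>{x, y}. \<forall>v\<in>{p, q}. arc u v \<or> arc v u"
  shows "(arc x p \<longleftrightarrow> arc y q) \<and> (arc x p \<longleftrightarrow> \<not> arc x q) \<and> (arc x p \<longleftrightarrow> \<not> arc y p)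
     \<and> (\<forall>u\<in>{x, y}. \<forall>v\<in>{p, q}. arc v u \<longrightarrow> (\<forall>z. arc u z \<longrightarrow> \<not> arc z v))"
proof -
  obtain x' y' p' q' where e: "{x, y} = {x', y'}" "{p, q} = {p', q'}"
    and lab: "loses_lab V arc x' y' p' q'"
    using lose unfolding loses_def by blast
  have xy: "(x' = x \<and> y' = y) \<or> (x' = y \<and> y' = x)"
    and pq: "(p' = p \<and> q' = q) \<or> (p' = q \<and> q' = p)"
    using e dist by (auto simp: doubleton_eq_iff)
  have "arc x' p' \<and> arc p' y' \<and> arc y' q' \<and> arc q' x'
      \<and> (\<forall>z. arc x' z \<longrightarrow> \<not> arc z q') \<and> (\<forall>z. arc y' z \<longrightarrow> \<not> arc z p')"
    by (rule loses_lab_arcs[OF og lab]) (use xy pq adj dist in auto)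
  moreover have "\<not> arc v u" if "arc u v" for u v
    using og that unfolding oriented_graph_def by blast
  ultimately show ?thesis using xy pq by blast
qed

lemma path_loses_arcs:
  assumes og: "oriented_graph V arc" and pl: "path_loses V arc a b c x y z"
    and "distinct [a, b, c]" "distinct [x, y, z]" "{a, b, c} \<inter> {x, y, z} = {}"
    and adj: "\<forall>u\<in>{a, b, c}. \<forall>v\<in>{x, y, z}. arc u v \<or> arc v u"
  shows "\<forall>u\<in>{a, b, c}. \<forall>v\<in>{x, y, z}. arc u v \<longleftrightarrow> ((u = b \<longleftrightarrow> v = y) \<longleftrightarrow> arc b y)"
    and "\<forall>u\<in>{a, b, c}. \<forall>v\<in>{x, y, z}. arc v u \<longrightarrow> (\<forall>w. arc u w \<longrightarrow> \<not> arc w v)"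
proof -
  have dist: "distinct [a, b, c, x, y, z]" using assms(3-5) by auto
  have lose: "loses V arc e e'" if "e \<in> {{a, b}, {c, b}}" "e' \<in> {{x, y}, {z, y}}" for e e'
    using pl that unfolding path_loses_def by (auto simp: insert_commute)
  have ab_xy: "(arc a x \<longleftrightarrow> arc b y) \<and> (arc a x \<longleftrightarrow> \<not> arc a y) \<and> (arc a x \<longleftrightarrow> \<not> arc b x)
      \<and> (\<forall>u\<in>{a, b}. \<forall>v\<in>{x, y}. arc v u \<longrightarrow> (\<forall>w. arc u w \<longrightarrow> \<not> arc w v))"
    by (rule loses_arcs[OF og lose]) (use dist adj in auto)
  have ab_yz: "(arc a y \<longleftrightarrow> arc b z) \<and> (arc a y \<longleftrightarrow> \<not> arc a z) \<and> (arc a y \<longleftrightarrow> \<not> arc b y)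
      \<and> (\<forall>u\<in>{a, b}. \<forall>v\<in>{y, z}. arc v u \<longrightarrow> (\<forall>w. arc u w \<longrightarrow> \<not> arc w v))"
    by (rule loses_arcs[OF og lose]) (use dist adj in \<open>auto simp: insert_commute\<close>)
  have cb_xy: "(arc c x \<longleftrightarrow> arc b y) \<and> (arc c x \<longleftrightarrow> \<not> arc c y) \<and> (arc c x \<longleftrightarrow> \<not> arc b x)
      \<and> (\<forall>u\<in>{c, b}. \<forall>v\<in>{x, y}. arc v u \<longrightarrow> (\<forall>w. arc u w \<longrightarrow> \<not> arc w v))"
    by (rule loses_arcs[OF og lose]) (use dist adj in auto)
  have cb_zy: "(arc c z \<longleftrightarrow> arc b y) \<and> (arc c z \<longleftrightarrow> \<not> arc c y) \<and> (arc c z \<longleftrightarrow> \<not> arc b z)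
      \<and> (\<forall>u\<in>{c, b}. \<forall>v\<in>{z, y}. arc v u \<longrightarrow> (\<forall>w. arc u w \<longrightarrow> \<not> arc w v))"
    by (rule loses_arcs[OF og lose]) (use dist adj in auto)
  show "\<forall>u\<in>{a, b, c}. \<forall>v\<in>{x, y, z}. arc u v \<longleftrightarrow> ((u = b \<longleftrightarrow> v = y) \<longleftrightarrow> arc b y)"
    using ab_xy ab_yz cb_xy cb_zy dist by auto
  show "\<forall>u\<in>{a, b, c}. \<forall>v\<in>{x, y, z}. arc v u \<longrightarrow> (\<forall>w. arc u w \<longrightarrow> \<not> arc w v)"
    using ab_xy ab_yz cb_xy cb_zy by blast
qed

section \<open>Tournament counting\<close>

lemma ex_in_card_le_out_card:
  assumes "finite I" "I \<noteq> {}"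
  shows "\<exists>t\<in>I. card {j \<in> I. R j t} \<le> card {j \<in> I. R t j}"
proof (rule ccontr)
  assume "\<not> ?thesis"
  then have "(\<Sum>t\<in>I. card {j \<in> I. R t j}) < (\<Sum>t\<in>I. card {j \<in> I. R j t})"
    using assms by (intro sum_strict_mono) auto
  moreover have "(\<Sum>t\<in>I. card {j \<in> I. R t j}) = card (SIGMA t:I. {j \<in> I. R t j})"
    using assms(1) by (simp add: card_SigmaI)
  moreover have "(\<Sum>t\<in>I. card {j \<in> I. R j t}) = card (SIGMA t:I. {j \<in> I. R j t})"
    using assms(1) by (simp add: card_SigmaI)
  moreover have "(SIGMA t:I. {j \<in> I. R j t}) = prod.swap ` (SIGMA t:I. {j \<in> I. R t j})"
    by (auto simp: image_iff)
  ultimately show False by (simp add: card_image)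
qed

lemma card_sources_le_1:
  assumes "\<forall>x\<in>U. \<forall>y\<in>U. x \<noteq> y \<longrightarrow> Q x y \<or> Q y x"
  shows "card {x \<in> U. \<forall>y\<in>U. y \<noteq> x \<longrightarrow> \<not> Q y x} \<le> 1" (is "card ?S \<le> 1")
proof (cases "finite ?S")
  case True
  have "x = y" if "x \<in> ?S" "y \<in> ?S" for x y
  proof (rule ccontr)
    assume "x \<noteq> y"
    then show False using assms that by (simp; metis)
  qed
  with True show ?thesis using card_le_Suc0_iff_eq[OF True] by simp
qed simp

lemma outN2I:
  assumes "u \<in> X" "u \<noteq> v" "\<not> arc v u" "w \<in> X" "arc v w" "arc w u"
  shows "u \<in> outN2 arc X v"
  using assms unfolding outN2_def outN_def by blast

section \<open>The arc pattern between the paths of a double cycle\<close>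

locale double_cycle_digraph =
  fixes V :: "'a set" and arc :: "'a \<Rightarrow> 'a \<Rightarrow> bool"
    and k :: nat and a b c :: "nat \<Rightarrow> 'a"
  assumes tournament: "tournament_missing_P2 V arc"
    and double_cycle: "double_cycle V arc k a b c"
begin

lemma oriented: "oriented_graph V arc"
  using tournament unfolding tournament_missing_P2_def by simp

lemma arc_asym: "arc u v \<Longrightarrow> \<not> arc v u"
  using oriented unfolding oriented_graph_def by blast

lemma arc_irrefl: "\<not> arc u u"
  using oriented unfolding oriented_graph_def by blast

lemma k_ge_2: "2 \<le> k"
  using double_cycle unfolding double_cycle_def by simp

lemma missN_path:
  assumes "i < k"
  shows "missN V arc (a i) = {b i}" "missN V arc (b i) = {a i, c i}" "missN V arc (c i) = {b i}"
    and "distinct [a i, b i, c i]"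
  using double_cycle assms unfolding double_cycle_def missing_path_def by auto

lemma path_in_V: "i < k \<Longrightarrow> {a i, b i, c i} \<subseteq> V"
  using missN_path(1,3)[of i] unfolding missN_def missing_def by blast

definition nx :: "nat \<Rightarrow> nat" where
  "nx i = Suc i mod k"

lemma nx_less: "nx i < k"
  using k_ge_2 by (simp add: nx_def)

lemma nx_neq: "i < k \<Longrightarrow> nx i \<noteq> i"
  using k_ge_2 by (simp add: nx_def mod_if)

lemma nx_shift: "nx ((j + m) mod k) = (j + Suc m) mod k"
  by (simp add: nx_def mod_Suc_eq)

lemma shift_neq: "j < k \<Longrightarrow> 0 < m \<Longrightarrow> m < k \<Longrightarrow> (j + m) mod k \<noteq> j"
  by (cases "j + m < k") (auto simp: mod_if)

lemma path_loses_nx: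
  "i < k \<Longrightarrow> path_loses V arc (a i) (b i) (c i) (a (nx i)) (b (nx i)) (c (nx i))"
  using double_cycle unfolding double_cycle_def nx_def by simp

lemma paths_disjoint:
  assumes "i < k" "j < k" "v \<in> {a i, b i, c i}" "v \<in> {a j, b j, c j}"
  shows "i = j"
proof (rule ccontr)
  assume "i \<noteq> j"
  moreover have "{a i, b i, c i} = {a j, b j, c j}"
    using assms missN_path[OF assms(1)] missN_path[OF assms(2)] by (auto simp: doubleton_eq_iff)
  ultimately show False
    using double_cycle assms(1,2) unfolding double_cycle_def by blast
qed

definition vert :: "nat \<Rightarrow> nat \<Rightarrow> 'a" where
  "vert i r = (if r = 0 then a i else if r = 1 then b i else c i)"

lemma vert_simps: "vert i 0 = a i" "vert i (Suc 0) = b i" "vert i 2 = c i"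
  by (simp_all add: vert_def)

lemma vert_image: "vert i ` {..<3} = {a i, b i, c i}"
proof -
  have "{..<3} = {0, Suc 0, 2::nat}" by auto
  then show ?thesis by (simp add: vert_simps)
qed

lemma vert_in_path: "r < 3 \<Longrightarrow> vert i r \<in> {a i, b i, c i}"
  using vert_image by blast

lemma vert_eq_b_iff:
  assumes "i < k" "r < 3"
  shows "vert i r = b i \<longleftrightarrow> r = 1"
  using missN_path(4)[OF assms(1)] assms(2) by (auto simp: vert_def)

lemma inj_on_vert: "inj_on (\<lambda>(i, r). vert i r) ({..<k} \<times> {..<3})"
proof (rule inj_onI, clarsimp)
  fix i r j s assume *: "i < k" "r < 3" "j < k" "s < 3" "vert i r = vert j s"
  then have "i = j" using paths_disjoint vert_in_path by metis
  moreover have "r \<in> {0, 1, 2}" "s \<in> {0, 1, 2}" using * by auto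
  ultimately show "i = j \<and> r = s"
    using * missN_path(4)[of i] by (auto simp: vert_simps)
qed

lemma KC_eq: "KC k a b c = (\<lambda>(i, r). vert i r) ` ({..<k} \<times> {..<3})"
  unfolding KC_def vert_image[symmetric] by force

lemma vert_adjacent:
  assumes "i < k" "j < k" "i \<noteq> j" "r < 3" "s < 3"
  shows "arc (vert i r) (vert j s) \<or> arc (vert j s) (vert i r)"
proof -
  have "missN V arc (vert i r) \<subseteq> {a i, b i, c i}"
    using missN_path[OF assms(1)] assms(4) by (auto simp: vert_def)
  moreover have "vert j s \<notin> {a i, b i, c i}"
    using paths_disjoint assms vert_in_path by blast
  moreover have "vert i r \<in> V" "vert j s \<in> V"
    using path_in_V assms vert_in_path by blast+
  moreover have "vert i r \<noteq> vert j s"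
    using paths_disjoint assms vert_in_path by metis
  ultimately show ?thesis unfolding missN_def missing_def by blast
qed

lemma arc_between_iff:
  "i < k \<Longrightarrow> j < k \<Longrightarrow> i \<noteq> j \<Longrightarrow> r < 3 \<Longrightarrow> s < 3 \<Longrightarrow>
    arc (vert j s) (vert i r) \<longleftrightarrow> \<not> arc (vert i r) (vert j s)"
  using vert_adjacent arc_asym by blast

lemma nx_path_arcs:
  assumes i: "i < k"
  shows "\<forall>u\<in>{a i, b i, c i}. \<forall>v\<in>{a (nx i), b (nx i), c (nx i)}.
           arc u v \<longleftrightarrow> ((u = b i \<longleftrightarrow> v = b (nx i)) \<longleftrightarrow> arc (b i) (b (nx i)))"
    and "\<forall>u\<in>{a i, b i, c i}. \<forall>v\<in>{a (nx i), b (nx i), c (nx i)}.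
           arc v u \<longrightarrow> (\<forall>w. arc u w \<longrightarrow> \<not> arc w v)"
proof -
  have j: "nx i < k" "nx i \<noteq> i" using nx_less nx_neq i by auto
  have disj: "{a i, b i, c i} \<inter> {a (nx i), b (nx i), c (nx i)} = {}"
  proof (rule ccontr)
    assume "{a i, b i, c i} \<inter> {a (nx i), b (nx i), c (nx i)} \<noteq> {}"
    then obtain v where "v \<in> {a i, b i, c i}" "v \<in> {a (nx i), b (nx i), c (nx i)}"
      by (auto simp only: ex_in_conv[symmetric] Int_iff)
    then have "i = nx i" by (rule paths_disjoint[OF i j(1)])
    with j(2) show False by simp
  qed
  have adj: "\<forall>u\<in>{a i, b i, c i}. \<forall>v\<in>{a (nx i), b (nx i), c (nx i)}. arc u v \<or> arc v u"
    using vert_adjacent[OF i j(1) j(2)[symmetric]] unfolding vert_image[symmetric] by blast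
  note arcs = path_loses_arcs[OF oriented path_loses_nx[OF i] missN_path(4)[OF i]
      missN_path(4)[OF j(1)] disj adj]
  show "\<forall>u\<in>{a i, b i, c i}. \<forall>v\<in>{a (nx i), b (nx i), c (nx i)}.
           arc u v \<longleftrightarrow> ((u = b i \<longleftrightarrow> v = b (nx i)) \<longleftrightarrow> arc (b i) (b (nx i)))"
    by (rule arcs(1))
  show "\<forall>u\<in>{a i, b i, c i}. \<forall>v\<in>{a (nx i), b (nx i), c (nx i)}.
           arc v u \<longrightarrow> (\<forall>w. arc u w \<longrightarrow> \<not> arc w v)"
    by (rule arcs(2))
qed

lemma arc_nx_iff:
  assumes "i < k" "r < 3" "s < 3"
  shows "arc (vert i r) (vert (nx i) s) \<longleftrightarrow> ((r = 1 \<longleftrightarrow> s = 1) \<longleftrightarrow> arc (b i) (b (nx i)))"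
proof -
  have "arc (vert i r) (vert (nx i) s) \<longleftrightarrow>
      ((vert i r = b i \<longleftrightarrow> vert (nx i) s = b (nx i)) \<longleftrightarrow> arc (b i) (b (nx i)))"
    using nx_path_arcs(1)[OF assms(1)] vert_in_path[OF assms(2)] vert_in_path[OF assms(3)] by blast
  then show ?thesis using vert_eq_b_iff[OF assms(1,2)] vert_eq_b_iff[OF nx_less assms(3)] by simp
qed

lemma no_back_two_path_nx:
  assumes "i < k" "r < 3" "s < 3" "arc (vert (nx i) s) (vert i r)" "arc (vert i r) w"
  shows "\<not> arc w (vert (nx i) s)"
  using nx_path_arcs(2)[OF assms(1)] vert_in_path assms by blast

text \<open>The vertices of a path form two classes, the middle (\<open>s = 1\<close>) and the two ends;
  \<open>\<phi>\<close> selects one of them.\<close>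

definition beaten_by_class :: "'a \<Rightarrow> nat \<Rightarrow> bool" where
  "beaten_by_class v i \<longleftrightarrow> (\<exists>\<phi>. \<forall>s<3. (s = 1 \<longleftrightarrow> \<phi>) \<longrightarrow> arc (vert i s) v)"

definition beats_class :: "'a \<Rightarrow> nat \<Rightarrow> bool" where
  "beats_class v i \<longleftrightarrow> (\<exists>\<phi>. \<forall>s<3. (s = 1 \<longleftrightarrow> \<phi>) \<longrightarrow> arc v (vert i s))"

lemma class_nonempty: "\<exists>s<3. (s::nat) = 1 \<longleftrightarrow> \<phi>"
proof (cases \<phi>)
  case True
  then show ?thesis by (intro exI[of _ 1]) simp
next
  case False
  then show ?thesis by (intro exI[of _ 0]) simp
qed

lemma beaten_by_class_nx_self:
  assumes j: "j < k" and r: "r < 3"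
  shows "beaten_by_class (vert j r) (nx j)"
  unfolding beaten_by_class_def
proof (rule exI[of _ "r = 1 \<longleftrightarrow> \<not> arc (b j) (b (nx j))"], intro allI impI)
  fix s :: nat assume s: "s < 3" "s = 1 \<longleftrightarrow> (r = 1 \<longleftrightarrow> \<not> arc (b j) (b (nx j)))"
  then have "\<not> arc (vert j r) (vert (nx j) s)"
    unfolding arc_nx_iff[OF j r s(1)] by (cases "r = 1") simp_all
  then show "arc (vert (nx j) s) (vert j r)"
    by (simp add: arc_between_iff[OF j nx_less nx_neq[OF j, symmetric] r s(1)])
qed

lemma beaten_by_class_nx:
  assumes i: "i < k" and j: "j < k" and r: "r < 3" and "nx i \<noteq> j"
    and "beaten_by_class (vert j r) i"
  shows "beaten_by_class (vert j r) (nx i)"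
proof -
  obtain \<phi> where \<phi>: "\<And>s. s < 3 \<Longrightarrow> (s = 1 \<longleftrightarrow> \<phi>) \<Longrightarrow> arc (vert i s) (vert j r)"
    using assms(5) unfolding beaten_by_class_def by auto
  obtain s0 :: nat where s0: "s0 < 3" "s0 = 1 \<longleftrightarrow> \<phi>" using class_nonempty by auto
  have s0_arc: "arc (vert i s0) (vert j r)" using \<phi>[OF s0] .
  show ?thesis unfolding beaten_by_class_def
  proof (rule exI[of _ "\<phi> \<longleftrightarrow> \<not> arc (b i) (b (nx i))"], intro allI impI)
    fix s :: nat assume s: "s < 3" "s = 1 \<longleftrightarrow> (\<phi> \<longleftrightarrow> \<not> arc (b i) (b (nx i)))"
    then have "\<not> arc (vert i s0) (vert (nx i) s)"
      unfolding arc_nx_iff[OF i s0(1) s(1)] using s0(2) by (cases \<phi>) simp_all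
    then have "arc (vert (nx i) s) (vert i s0)"
      by (simp add: arc_between_iff[OF i nx_less nx_neq[OF i, symmetric] s0(1) s(1)])
    then have "\<not> arc (vert j r) (vert (nx i) s)"
      using no_back_two_path_nx[OF i s0(1) s(1)] s0_arc by blast
    then show "arc (vert (nx i) s) (vert j r)"
      by (simp add: arc_between_iff[OF j nx_less assms(4)[symmetric] r s(1)])
  qed
qed

lemma beaten_by_class_shift:
  assumes j: "j < k" and r: "r < 3" and m: "0 < m" "m < k"
  shows "beaten_by_class (vert j r) ((j + m) mod k)"
proof -
  have "1 \<le> m" using m by simp
  then show ?thesis
  proof (induction rule: dec_induct)
    case base
    then show ?case using beaten_by_class_nx_self[OF j r] by (simp add: nx_def)
  next
    case (step n)
    have "nx ((j + n) mod k) \<noteq> j"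
      using shift_neq[OF j, of "Suc n"] step.hyps m(2) by (simp add: nx_shift)
    from beaten_by_class_nx[OF _ j r this step.IH] show ?case
      using k_ge_2 by (simp add: nx_shift)
  qed
qed

lemma beats_class_self:
  assumes i: "i < k" and r: "r < 3"
  shows "beats_class (vert (nx i) r) i"
  unfolding beats_class_def
proof (rule exI[of _ "r = 1 \<longleftrightarrow> \<not> arc (b i) (b (nx i))"], intro allI impI)
  fix s :: nat assume s: "s < 3" "s = 1 \<longleftrightarrow> (r = 1 \<longleftrightarrow> \<not> arc (b i) (b (nx i)))"
  then have "\<not> arc (vert i s) (vert (nx i) r)"
    unfolding arc_nx_iff[OF i s(1) r] by (cases "r = 1") simp_all
  then show "arc (vert (nx i) r) (vert i s)"
    by (simp add: arc_between_iff[OF i nx_less nx_neq[OF i, symmetric] s(1) r])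
qed

lemma beats_class_of_nx:
  assumes i: "i < k" and j: "j < k" and r: "r < 3" and "i \<noteq> j"
    and "beats_class (vert j r) (nx i)"
  shows "beats_class (vert j r) i"
proof -
  obtain \<phi> where \<phi>: "\<And>s. s < 3 \<Longrightarrow> (s = 1 \<longleftrightarrow> \<phi>) \<Longrightarrow> arc (vert j r) (vert (nx i) s)"
    using assms(5) unfolding beats_class_def by auto
  obtain s0 :: nat where s0: "s0 < 3" "s0 = 1 \<longleftrightarrow> \<phi>" using class_nonempty by auto
  have s0_arc: "arc (vert j r) (vert (nx i) s0)" using \<phi>[OF s0] .
  show ?thesis unfolding beats_class_def
  proof (rule exI[of _ "\<phi> \<longleftrightarrow> \<not> arc (b i) (b (nx i))"], intro allI impI)
    fix s :: nat assume s: "s < 3" "s = 1 \<longleftrightarrow> (\<phi> \<longleftrightarrow> \<not> arc (b i) (b (nx i)))"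
    then have "\<not> arc (vert i s) (vert (nx i) s0)"
      unfolding arc_nx_iff[OF i s(1) s0(1)] using s0(2) by (cases \<phi>) simp_all
    then have "arc (vert (nx i) s0) (vert i s)"
      by (simp add: arc_between_iff[OF i nx_less nx_neq[OF i, symmetric] s(1) s0(1)])
    then have "\<not> arc (vert i s) (vert j r)"
      using no_back_two_path_nx[OF i s(1) s0(1)] s0_arc by blast
    then show "arc (vert j r) (vert i s)"
      by (simp add: arc_between_iff[OF i j assms(4) s(1) r])
  qed
qed

lemma beats_class_shift:
  assumes j: "j < k" and r: "r < 3" and m: "0 < m" "m < k"
  shows "beats_class (vert j r) ((j + m) mod k)"
proof -
  have "m \<le> k - 1" using m by simp
  then show ?thesis
  proof (induction rule: inc_induct)
    case base
    have "nx ((j + (k - 1)) mod k) = j"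
      using nx_shift[of j "k - 1"] j m by simp
    then show ?case using beats_class_self[of "(j + (k - 1)) mod k" r] r m by simp
  next
    case (step n)
    have "(j + n) mod k \<noteq> j" using shift_neq[OF j, of n] step.hyps m by simp
    with beats_class_of_nx[OF _ j r _ ] step.IH show ?case
      using k_ge_2 by (simp add: nx_shift)
  qed
qed

lemma arc_to_vert_by_class:
  assumes i: "i < k" and j: "j < k" "i \<noteq> j" and r: "r < 3"
  shows "\<exists>\<phi>. \<forall>s<3. arc (vert i s) (vert j r) \<longleftrightarrow> (s = 1 \<longleftrightarrow> \<phi>)"
proof -
  define m where "m = (if j \<le> i then i - j else i + k - j)"
  have m: "0 < m" "m < k" "(j + m) mod k = i" using i j by (auto simp: m_def)
  obtain \<phi> where \<phi>: "\<And>s. s < 3 \<Longrightarrow> (s = 1 \<longleftrightarrow> \<phi>) \<Longrightarrow> arc (vert i s) (vert j r)"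
    using beaten_by_class_shift[OF j(1) r m(1,2)] unfolding m(3) beaten_by_class_def by auto
  obtain \<psi> where \<psi>: "\<And>s. s < 3 \<Longrightarrow> (s = 1 \<longleftrightarrow> \<psi>) \<Longrightarrow> arc (vert j r) (vert i s)"
    using beats_class_shift[OF j(1) r m(1,2)] unfolding m(3) beats_class_def by auto
  have \<psi>\<phi>: "\<psi> \<longleftrightarrow> \<not> \<phi>"
  proof (rule ccontr)
    assume "\<not> (\<psi> \<longleftrightarrow> \<not> \<phi>)"
    moreover obtain s :: nat where "s < 3" "s = 1 \<longleftrightarrow> \<phi>" using class_nonempty by auto
    ultimately have "arc (vert i s) (vert j r)" "arc (vert j r) (vert i s)"
      using \<phi> \<psi> by auto
    then show False using arc_asym by blast
  qed
  have "arc (vert i s) (vert j r) \<longleftrightarrow> (s = 1 \<longleftrightarrow> \<phi>)" if s: "s < 3" for s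
  proof (cases "s = 1 \<longleftrightarrow> \<phi>")
    case True
    then show ?thesis using \<phi>[OF s] by simp
  next
    case False
    then have "arc (vert j r) (vert i s)" using \<psi>[OF s] \<psi>\<phi> by auto
    then show ?thesis using False arc_asym by auto
  qed
  then show ?thesis by auto
qed

lemma arc_between_paths:
  assumes i: "i < k" and j: "j < k" and ij: "i \<noteq> j" and r: "r < 3" and s: "s < 3"
  shows "arc (vert i r) (vert j s) \<longleftrightarrow> ((r = 1 \<longleftrightarrow> s = 1) \<longleftrightarrow> arc (b i) (b j))"
proof -
  have one: "(1::nat) < 3" by simp
  obtain \<phi> where \<phi>: "\<And>r'. r' < 3 \<Longrightarrow> arc (vert i r') (vert j s) \<longleftrightarrow> (r' = 1 \<longleftrightarrow> \<phi>)"
    using arc_to_vert_by_class[OF i j ij s] by auto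
  obtain \<psi> where \<psi>: "\<And>s'. s' < 3 \<Longrightarrow> arc (vert j s') (vert i 1) \<longleftrightarrow> (s' = 1 \<longleftrightarrow> \<psi>)"
    using arc_to_vert_by_class[OF j i ij[symmetric] one] by auto
  have "\<phi> \<longleftrightarrow> arc (vert i 1) (vert j s)" using \<phi>[OF one] by simp
  also have "\<dots> \<longleftrightarrow> \<not> arc (vert j s) (vert i 1)"
    using arc_between_iff[OF j i ij[symmetric] s one] by simp
  also have "\<dots> \<longleftrightarrow> (s = 1 \<longleftrightarrow> \<not> \<psi>)" using \<psi>[OF s] by simp
  finally have "\<phi> \<longleftrightarrow> (s = 1 \<longleftrightarrow> \<not> \<psi>)" .
  moreover have "\<not> \<psi> \<longleftrightarrow> arc (vert i 1) (vert j 1)"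
    using \<psi>[OF one] arc_between_iff[OF j i ij[symmetric] one one] by simp
  ultimately show ?thesis using \<phi>[OF r] vert_simps(2) by (cases "r = 1"; cases "s = 1") simp_all
qed

section \<open>The neighbourhoods of a middle vertex\<close>

lemma vert_in_KC: "i < k \<Longrightarrow> r < 3 \<Longrightarrow> vert i r \<in> KC k a b c"
  unfolding KC_eq by force

lemma b_tournament: "i < k \<Longrightarrow> j < k \<Longrightarrow> i \<noteq> j \<Longrightarrow> arc (b i) (b j) \<or> arc (b j) (b i)"
  using vert_adjacent[of i j 1 1] by (simp add: vert_simps)

lemma arc_from_b_iff:
  assumes "t < k" "j < k" "j \<noteq> t" "s < 3"
  shows "arc (b t) (vert j s) \<longleftrightarrow> (s = 1 \<longleftrightarrow> arc (b t) (b j))"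
  using arc_between_paths[OF assms(1,2) assms(3)[symmetric] _ assms(4), of 1]
  by (simp add: vert_simps)

lemma not_arc_b_own_path:
  assumes "t < k" "r < 3"
  shows "\<not> arc (b t) (vert t r)"
proof -
  have "missing V arc (b t) (a t)" "missing V arc (b t) (c t)"
    using missN_path(2)[OF assms(1)] unfolding missN_def by blast+
  moreover have "r \<in> {0, 1, 2}" using assms(2) by auto
  ultimately show ?thesis using arc_irrefl unfolding missing_def by (auto simp: vert_simps)
qed

definition out_paths :: "nat \<Rightarrow> nat set" where
  "out_paths t = {j \<in> {..<k}. arc (b t) (b j)}"

definition in_paths :: "nat \<Rightarrow> nat set" where
  "in_paths t = {j \<in> {..<k}. arc (b j) (b t)}"

lemma outN_b_eq:
  assumes t: "t < k"
  shows "outN arc (KC k a b c) (b t) =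
    (\<lambda>(i, r). vert i r) ` (out_paths t \<times> {1} \<union> in_paths t \<times> {0, 2})"
proof -
  have "outN arc (KC k a b c) (b t) =
      (\<lambda>(i, r). vert i r) ` {(i, r) \<in> {..<k} \<times> {..<3}. arc (b t) (vert i r)}"
    unfolding outN_def KC_eq by auto
  also have "{(i, r) \<in> {..<k} \<times> {..<3}. arc (b t) (vert i r)} =
      out_paths t \<times> {1} \<union> in_paths t \<times> {0, 2}" (is "?L = ?R")
  proof (rule set_eqI)
    fix p :: "nat \<times> nat"
    obtain i r where p: "p = (i, r)" by (cases p)
    show "p \<in> ?L \<longleftrightarrow> p \<in> ?R"
    proof (cases "i < k \<and> r < 3 \<and> i \<noteq> t")
      case True
      then show ?thesis
        using p arc_from_b_iff[OF t] b_tournament[OF t] arc_asym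
        by (auto simp: out_paths_def in_paths_def)
    next
      case False
      then show ?thesis
        using p not_arc_b_own_path[OF t] arc_irrefl by (auto simp: out_paths_def in_paths_def)
    qed
  qed
  finally show ?thesis .
qed

lemma card_outN_b:
  assumes t: "t < k"
  shows "card (outN arc (KC k a b c) (b t)) = card (out_paths t) + 2 * card (in_paths t)"
proof -
  have sub: "out_paths t \<times> {1::nat} \<union> in_paths t \<times> {0, 2} \<subseteq> {..<k} \<times> {..<3}"
    by (auto simp: out_paths_def in_paths_def)
  have fin: "finite (out_paths t)" "finite (in_paths t)"
    by (simp_all add: out_paths_def in_paths_def)
  have "card (outN arc (KC k a b c) (b t)) = card (out_paths t \<times> {1::nat} \<union> in_paths t \<times> {0, 2})"
    unfolding outN_b_eq[OF t] by (rule card_image[OF inj_on_subset[OF inj_on_vert sub]])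
  also have "\<dots> = card (out_paths t \<times> {1::nat}) + card (in_paths t \<times> {0::nat, 2})"
    by (rule card_Un_disjoint) (use fin in auto)
  finally show ?thesis by (simp add: card_cartesian_product)
qed

text \<open>\<open>feeds t l j\<close>: the out-neighbours of \<open>b t\<close> on path \<open>l\<close> beat the vertices of path
  \<open>j\<close> that are not out-neighbours of \<open>b t\<close>.\<close>

definition feeds :: "nat \<Rightarrow> nat \<Rightarrow> nat \<Rightarrow> bool" where
  "feeds t l j \<longleftrightarrow> (arc (b l) (b j) \<longleftrightarrow> (arc (b t) (b l) \<longleftrightarrow> \<not> arc (b t) (b j)))"

lemma feeds_total:
  assumes "t < k" "j < k" "l < k" "j \<noteq> l"
  shows "feeds t j l \<or> feeds t l j"
  using b_tournament[OF assms(2-4)] arc_asym[of "b j" "b l"] unfolding feeds_def by auto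

lemma feeds_in_outN2:
  assumes t: "t < k" and l: "l < k" "l \<noteq> t" and j: "j < k" "j \<noteq> t" "l \<noteq> j"
    and "feeds t l j" and r: "r < 3" "r = 1 \<longleftrightarrow> \<not> arc (b t) (b j)"
  shows "vert j r \<in> outN2 arc (KC k a b c) (b t)"
proof -
  obtain s :: nat where s: "s < 3" "s = 1 \<longleftrightarrow> arc (b t) (b l)" using class_nonempty by auto
  show ?thesis
  proof (rule outN2I)
    show "vert j r \<in> KC k a b c" "vert l s \<in> KC k a b c"
      using vert_in_KC j l r s by auto
    show "vert j r \<noteq> b t"
      using paths_disjoint[OF j(1) t] vert_in_path[OF r(1)] j(2) by blast
    show "\<not> arc (b t) (vert j r)" "arc (b t) (vert l s)"
      using arc_from_b_iff[OF t j(1,2) r(1)] arc_from_b_iff[OF t l s(1)] r(2) s(2) by auto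
    show "arc (vert l s) (vert j r)"
      using \<open>feeds t l j\<close> r(2) s(2) unfolding arc_between_paths[OF l(1) j(1) j(3) s(1) r(1)] feeds_def
      by (cases "s = 1"; cases "r = 1") auto
  qed
qed

lemma own_ends_in_outN2:
  assumes t: "t < k" and r: "r \<in> {0, 2}"
  shows "vert t r \<in> outN2 arc (KC k a b c) (b t)"
proof -
  define l :: nat where "l = (if t = 0 then 1 else 0)"
  have l: "l < k" "l \<noteq> t" using k_ge_2 by (auto simp: l_def)
  obtain s :: nat where s: "s < 3" "s = 1 \<longleftrightarrow> arc (b t) (b l)" using class_nonempty by auto
  have r3: "r < 3" "r \<noteq> 1" using r by auto
  show ?thesis
  proof (rule outN2I)
    show "vert t r \<in> KC k a b c" "vert l s \<in> KC k a b c"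
      using vert_in_KC t l r3 s by auto
    show "vert t r \<noteq> b t" using vert_eq_b_iff[OF t r3(1)] r3(2) by simp
    show "\<not> arc (b t) (vert t r)" by (rule not_arc_b_own_path[OF t r3(1)])
    show "arc (b t) (vert l s)" using arc_from_b_iff[OF t l s(1)] s(2) by simp
    show "arc (vert l s) (vert t r)"
      using s(2) r3(2) b_tournament[OF t l(1) l(2)[symmetric]] arc_asym[of "b t" "b l"]
      unfolding arc_between_paths[OF l(1) t l(2) s(1) r3(1)] by auto
  qed
qed

definition unfed :: "nat \<Rightarrow> nat set" where
  "unfed t = {j \<in> {..<k} - {t}. \<forall>l\<in>{..<k} - {t}. l \<noteq> j \<longrightarrow> \<not> feeds t l j}"

lemma card_unfed_le_1: "t < k \<Longrightarrow> card (unfed t) \<le> 1"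
  unfolding unfed_def by (rule card_sources_le_1) (use feeds_total in auto)

lemma card_unfed_paths_le_1:
  assumes t: "t < k"
  shows "card (out_paths t \<inter> unfed t) + card (in_paths t \<inter> unfed t) \<le> 1"
proof -
  have "out_paths t \<inter> in_paths t = {}"
    using arc_asym by (auto simp: out_paths_def in_paths_def)
  then have "card (out_paths t \<inter> unfed t) + card (in_paths t \<inter> unfed t) =
      card ((out_paths t \<union> in_paths t) \<inter> unfed t)"
    by (subst card_Un_disjoint[symmetric]) (auto simp: out_paths_def in_paths_def Int_Un_distrib2)
  also have "\<dots> \<le> card (unfed t)"
    by (rule card_mono) (auto simp: unfed_def)
  also have "\<dots> \<le> 1" by (rule card_unfed_le_1[OF t])
  finally show ?thesis .
qed

lemma outN2_b_contains:
  assumes t: "t < k"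
  shows "(\<lambda>(i, r). vert i r) ` ({(t, 0), (t, 2)} \<union> (out_paths t - unfed t) \<times> {0, 2}
           \<union> (in_paths t - unfed t) \<times> {1}) \<subseteq> outN2 arc (KC k a b c) (b t)"
proof clarify
  fix i r assume "(i, r) \<in> {(t, 0), (t, 2)} \<union> (out_paths t - unfed t) \<times> {0, 2}
           \<union> (in_paths t - unfed t) \<times> {1::nat}"
  then consider "i = t" "r \<in> {0, 2}"
    | "i \<in> out_paths t - unfed t" "r \<in> {0, 2}"
    | "i \<in> in_paths t - unfed t" "r = 1"
    by auto
  then show "vert i r \<in> outN2 arc (KC k a b c) (b t)"
  proof cases
    case 1
    then show ?thesis using own_ends_in_outN2[OF t] by simp
  next
    case 2
    then have i: "i < k" "i \<noteq> t" "arc (b t) (b i)"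
      using arc_irrefl by (auto simp: out_paths_def)
    with 2 obtain l where "l < k" "l \<noteq> t" "l \<noteq> i" "feeds t l i"
      by (auto simp: unfed_def)
    with 2 i show ?thesis
      using feeds_in_outN2[OF t] by auto
  next
    case 3
    then have i: "i < k" "i \<noteq> t" "\<not> arc (b t) (b i)"
      using arc_irrefl arc_asym by (auto simp: in_paths_def)
    with 3 obtain l where "l < k" "l \<noteq> t" "l \<noteq> i" "feeds t l i"
      by (auto simp: unfed_def)
    with 3 i show ?thesis
      using feeds_in_outN2[OF t] by auto
  qed
qed

lemma card_outN2_b_ge:
  assumes t: "t < k"
  shows "2 * card (out_paths t) + card (in_paths t) \<le> card (outN2 arc (KC k a b c) (b t))"
proof -
  let ?O = "out_paths t" and ?I = "in_paths t" and ?S = "unfed t"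
  define Y where "Y = {(t, 0), (t, 2)} \<union> ((?O - ?S) \<times> {0, 2} \<union> (?I - ?S) \<times> {1::nat})"
  have fin: "finite ?O" "finite ?I" by (simp_all add: out_paths_def in_paths_def)
  have disj: "?O \<inter> ?I = {}" "t \<notin> ?O" "t \<notin> ?I"
    using arc_asym arc_irrefl by (auto simp: out_paths_def in_paths_def)
  have "card Y = card {(t, 0::nat), (t, 2)} + card ((?O - ?S) \<times> {0::nat, 2} \<union> (?I - ?S) \<times> {1})"
    unfolding Y_def by (rule card_Un_disjoint) (use fin disj in auto)
  also have "card ((?O - ?S) \<times> {0::nat, 2} \<union> (?I - ?S) \<times> {1}) =
      card ((?O - ?S) \<times> {0::nat, 2}) + card ((?I - ?S) \<times> {1::nat})"
    by (rule card_Un_disjoint) (use fin in auto)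
  finally have card_Y: "card Y = 2 + 2 * card (?O - ?S) + card (?I - ?S)"
    by (simp add: card_cartesian_product)
  have "card (?O \<inter> ?S) + card (?I \<inter> ?S) \<le> 1" by (rule card_unfed_paths_le_1[OF t])
  moreover have "card ?O = card (?O \<inter> ?S) + card (?O - ?S)" "card ?I = card (?I \<inter> ?S) + card (?I - ?S)"
    using fin by (simp_all add: card_Int_Diff)
  ultimately have "2 * card ?O + card ?I \<le> card Y" using card_Y by linarith
  also have "card Y = card ((\<lambda>(i, r). vert i r) ` Y)"
    by (rule card_image[symmetric], rule inj_on_subset[OF inj_on_vert])
      (use t in \<open>auto simp: Y_def out_paths_def in_paths_def\<close>)
  also have "\<dots> \<le> card (outN2 arc (KC k a b c) (b t))"
  proof (rule card_mono)
    show "finite (outN2 arc (KC k a b c) (b t))"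
      by (rule finite_subset[of _ "KC k a b c"]) (auto simp: outN2_def KC_def)
    show "(\<lambda>(i, r). vert i r) ` Y \<subseteq> outN2 arc (KC k a b c) (b t)"
      using outN2_b_contains[OF t] by (simp add: Y_def Un_assoc)
  qed
  finally show ?thesis .
qed

end

theorem proposition4p12:
  fixes V :: "'a set" and arc :: "'a \<Rightarrow> 'a \<Rightarrow> bool"
    and k :: nat and a b c :: "nat \<Rightarrow> 'a"
  assumes "tournament_missing_P2 V arc"
    and "double_cycle V arc k a b c"
  shows "\<exists>t < k. card (outN arc (KC k a b c) (b t)) \<le> card (outN2 arc (KC k a b c) (b t))"
proof -
  interpret double_cycle_digraph V arc k a b c
    using assms by unfold_locales
  have "0 \<in> {..<k}" using k_ge_2 by simp
  then obtain t where t: "t < k" "card (in_paths t) \<le> card (out_paths t)"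
    using ex_in_card_le_out_card[of "{..<k}" "\<lambda>i j. arc (b i) (b j)"] empty_iff
    unfolding in_paths_def out_paths_def by auto
  have "card (outN arc (KC k a b c) (b t)) = card (out_paths t) + 2 * card (in_paths t)"
    by (rule card_outN_b[OF t(1)])
  also have "\<dots> \<le> 2 * card (out_paths t) + card (in_paths t)" using t(2) by simp
  also have "\<dots> \<le> card (outN2 arc (KC k a b c) (b t))" by (rule card_outN2_b_ge[OF t(1)])
  finally show ?thesis using t(1) by blast
qed

end
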